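(* Let $\mathcal M=(X,\mathcal A,\mu,\mu^{\otimes2},R,I,\Pi_R,G,E_0,\eta)$ and $\mathcal M'=(X',\mathcal A',\mu',\mu'^{\otimes2},R',I',\Pi_{R'},G',E_0',\eta)$ be admissible structural models with a common $\eta\in[0,1)$, and let $\phi:\mathcal M\to\mathcal M'$ be a morphism. Then: (i) If $(\phi\times\phi)^{-1}(G')\subseteq G$, then for every $B'\in\mathcal A'$, \[\mu'^{\otimes2}((B'\times X')\cap G')\le\mu^{\otimes2}((\phi^{-1}(B')\times X)\cap G)=\mu(\phi^{-1}(B'))+\eta\,\mu^{\otimes2}((\Pi_R^{-1}(\phi^{-1}(B'))\times X)\cap G).\] (ii) If in addition $\phi$ is surjective and $(\phi\times\phi)^{-1}(G')=G$, then for every $B'\in\mathcal A'$, \[\mu'^{\otimes2}((B'\times X')\cap G')=\mu'(B')+\eta\,\mu'^{\otimes2}((\Pi_{R'}^{-1}(B')\times X')\cap G').\]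
   Context: An admissible structural model is a tuple $(X,\mathcal A,\mu,\mu^{\otimes2},R,I,\Pi_R,G,E_0,\eta)$ with $X$ nonempty, $\mathcal A\subseteq\mathcal P(X)$ an algebra, $\mu:\mathcal A\to[0,\infty)$ finitely additive, $\mu^{\otimes2}$ finitely additive on the algebra $\mathcal A\otimes\mathcal A$ generated by rectangles with $\mu^{\otimes2}(B_1\times B_2)=\mu(B_1)\mu(B_2)$, $R,I\in\mathcal A$ disjoint, $\Pi_R:X\to R$ a map, $G\in\mathcal A\otimes\mathcal A$, $E_0>0$, $\eta\in[0,1]$, satisfying: Axiom I: $\Pi_R\circ\Pi_R=\Pi_R$, $\Pi_R|_R=\mathrm{id}_R$, $\Pi_R^{-1}(B)\in\mathcal A$ for $B\in\mathcal A$, $B\subseteq R$; Axiom II: $G$ reflexive, symmetric, $G\circ G=G$ (relational composition); Axiom III: $\mu(R)+\mu(I)=E_0$, $\mu(\Pi_R^{-1}(B))=\mu(B)$ for $B\in\mathcal A$, $B\subseteq R$, and for all $B\in\mathcal A$, $\mu^{\otimes2}((B\times X)\cap G)=\mu(B)+\eta\,\mu^{\otimes2}((\Pi_R^{-1}(B)\times X)\cap G)$. A morphism $\phi:\mathcal M\to\mathcal M'$ between admissible structural models with the same $\eta$ (the $E_0,E_0'$ may differ) is a map $\phi:X\to X'$ such that: (M1) $\phi^{-1}(B')\in\mathcal A$ for all $B'\in\mathcal A'$ and $(\phi\times\phi)^{-1}(S')\in\mathcal A\otimes\mathcal A$ for all $S'\in\mathcal A'\otimes\mathcal A'$; (M2)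 $\phi\circ\Pi_R=\Pi_{R'}\circ\phi$; (M3) $(x,y)\in G$ implies $(\phi(x),\phi(y))\in G'$; (M4) $\mu(\phi^{-1}(B'))=\mu'(B')$ for all $B'\in\mathcal A'$ and $\mu^{\otimes2}((\phi\times\phi)^{-1}(S'))=\mu'^{\otimes2}(S')$ for all $S'\in\mathcal A'\otimes\mathcal A'$. *)

theory Defs
  imports Complex_Main
begin

definition set_algebra :: "'a set \<Rightarrow> 'a set set \<Rightarrow> bool" where
  "set_algebra X A \<longleftrightarrow> A \<subseteq> Pow X \<and> {} \<in> A \<and>
     (\<forall>B\<in>A. X - B \<in> A) \<and> (\<forall>B\<in>A. \<forall>C\<in>A. B \<union> C \<in> A)"

definition prod_algebra :: "'a set \<Rightarrow> 'a set set \<Rightarrow> ('a \<times> 'a) set set" where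
  "prod_algebra X A = \<Inter>{S. set_algebra (X \<times> X) S \<and>
      {B1 \<times> B2 | B1 B2. B1 \<in> A \<and> B2 \<in> A} \<subseteq> S}"

definition fin_additive :: "'b set set \<Rightarrow> ('b set \<Rightarrow> real) \<Rightarrow> bool" where
  "fin_additive A m \<longleftrightarrow> (\<forall>B\<in>A. 0 \<le> m B) \<and>
     (\<forall>B\<in>A. \<forall>C\<in>A. B \<inter> C = {} \<longrightarrow> m (B \<union> C) = m B + m C)"

record 'a struct_model =
  sm_X :: "'a set"
  sm_A :: "'a set set"
  sm_mu :: "'a set \<Rightarrow> real"
  sm_mu2 :: "('a \<times> 'a) set \<Rightarrow> real"
  sm_R :: "'a set"
  sm_I :: "'a set"
  sm_Pi :: "'a \<Rightarrow> 'a"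
  sm_G :: "('a \<times> 'a) set"
  sm_E0 :: real
  sm_eta :: real

definition Pi_pre :: "'a struct_model \<Rightarrow> 'a set \<Rightarrow> 'a set" where
  "Pi_pre M B = {x \<in> sm_X M. sm_Pi M x \<in> B}"

definition admissible :: "'a struct_model \<Rightarrow> bool" where
  "admissible M \<longleftrightarrow>
     (let X = sm_X M; A = sm_A M; AA = prod_algebra X A; mu = sm_mu M; mu2 = sm_mu2 M;
          R = sm_R M; I = sm_I M; P = sm_Pi M; G = sm_G M; eta = sm_eta M in
      X \<noteq> {} \<and> set_algebra X A \<and> fin_additive A mu \<and> fin_additive AA mu2 \<and>
      (\<forall>B1\<in>A. \<forall>B2\<in>A. mu2 (B1 \<times> B2) = mu B1 * mu B2) \<and>
      R \<in> A \<and> I \<in> A \<and> R \<inter> I = {} \<and> P ` X \<subseteq> R \<and> G \<in> AA \<and>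
      sm_E0 M > 0 \<and> 0 \<le> eta \<and> eta \<le> 1 \<and>
      \<comment> \<open>Axiom I\<close>
      (\<forall>x\<in>X. P (P x) = P x) \<and> (\<forall>x\<in>R. P x = x) \<and>
      (\<forall>B\<in>A. B \<subseteq> R \<longrightarrow> Pi_pre M B \<in> A) \<and>
      \<comment> \<open>Axiom II\<close>
      refl_on X G \<and> sym G \<and> G O G = G \<and>
      \<comment> \<open>Axiom III\<close>
      mu R + mu I = sm_E0 M \<and>
      (\<forall>B\<in>A. B \<subseteq> R \<longrightarrow> mu (Pi_pre M B) = mu B) \<and>
      (\<forall>B\<in>A. mu2 ((B \<times> X) \<inter> G) = mu B + eta * mu2 ((Pi_pre M B \<times> X) \<inter> G)))"

definition pre :: "'a set \<Rightarrow> ('a \<Rightarrow> 'b) \<Rightarrow> 'b set \<Rightarrow> 'a set" where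
  "pre X f B = {x \<in> X. f x \<in> B}"

definition pre2 :: "'a set \<Rightarrow> ('a \<Rightarrow> 'b) \<Rightarrow> ('b \<times> 'b) set \<Rightarrow> ('a \<times> 'a) set" where
  "pre2 X f S = {p \<in> X \<times> X. (f (fst p), f (snd p)) \<in> S}"

definition morphism :: "'a struct_model \<Rightarrow> 'b struct_model \<Rightarrow> ('a \<Rightarrow> 'b) \<Rightarrow> bool" where
  "morphism M M' f \<longleftrightarrow>
     admissible M \<and> admissible M' \<and> sm_eta M = sm_eta M' \<and>
     f ` sm_X M \<subseteq> sm_X M' \<and>
     \<comment> \<open>M1\<close>
     (\<forall>B'\<in>sm_A M'. pre (sm_X M) f B' \<in> sm_A M) \<and>
     (\<forall>S'\<in>prod_algebra (sm_X M') (sm_A M'). pre2 (sm_X M) f S' \<in> prod_algebra (sm_X M) (sm_A M)) \<and>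
     \<comment> \<open>M2\<close>
     (\<forall>x\<in>sm_X M. f (sm_Pi M x) = sm_Pi M' (f x)) \<and>
     \<comment> \<open>M3\<close>
     (\<forall>x y. (x, y) \<in> sm_G M \<longrightarrow> (f x, f y) \<in> sm_G M') \<and>
     \<comment> \<open>M4\<close>
     (\<forall>B'\<in>sm_A M'. sm_mu M (pre (sm_X M) f B') = sm_mu M' B') \<and>
     (\<forall>S'\<in>prod_algebra (sm_X M') (sm_A M'). sm_mu2 M (pre2 (sm_X M) f S') = sm_mu2 M' S')"

end

theory Submission
  imports Defs
begin

text \<open>Part (ii) is Axiom III of the target model itself. For part (i), the left-hand side is
  the measure of a set in the product algebra of the target; by (M4) it equals the measure
  of its preimage under \<phi> \<times> \<phi>, and the hypothesis on G makes that preimage a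
  subset of (pre X \<phi> B' \<times> X) \<inter> G, so the inequality follows from monotonicity of
  the finitely additive product measure. The equality is Axiom III of the source model
  at pre X \<phi> B'.\<close>

lemma set_algebra_space:
  assumes "set_algebra X A" shows "X \<in> A"
  using assms unfolding set_algebra_def by (metis Diff_empty)

lemma set_algebra_Int:
  assumes "set_algebra X A" "B \<in> A" "C \<in> A" shows "B \<inter> C \<in> A"
proof -
  have "X - ((X - B) \<union> (X - C)) \<in> A"
    using assms unfolding set_algebra_def by blast
  moreover have "X - ((X - B) \<union> (X - C)) = B \<inter> C"
    using assms unfolding set_algebra_def by auto
  ultimately show ?thesis by simp
qed

lemma set_algebra_Diff:
  assumes "set_algebra X A" "B \<in> A" "C \<in> A" shows "C - B \<in> A"
proof -
  have "C \<inter> (X - B) \<in> A"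
    using assms set_algebra_Int unfolding set_algebra_def by blast
  moreover have "C \<inter> (X - B) = C - B"
    using assms unfolding set_algebra_def by auto
  ultimately show ?thesis by simp
qed

lemma set_algebra_Pow: "set_algebra X (Pow X)"
  unfolding set_algebra_def by auto

lemma set_algebra_Inter:
  assumes "\<S> \<noteq> {}" "\<And>S. S \<in> \<S> \<Longrightarrow> set_algebra X S"
  shows "set_algebra X (\<Inter>\<S>)"
  using assms unfolding set_algebra_def by blast

lemma set_algebra_prod_algebra:
  assumes "set_algebra X A"
  shows "set_algebra (X \<times> X) (prod_algebra X A)"
proof -
  have "Pow (X \<times> X) \<in> {S. set_algebra (X \<times> X) S \<and>
      {B1 \<times> B2 | B1 B2. B1 \<in> A \<and> B2 \<in> A} \<subseteq> S}"
    using assms set_algebra_Pow unfolding set_algebra_def by blast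
  then show ?thesis
    unfolding prod_algebra_def by (intro set_algebra_Inter) auto
qed

lemma Times_in_prod_algebra:
  assumes "B1 \<in> A" "B2 \<in> A" shows "B1 \<times> B2 \<in> prod_algebra X A"
  using assms unfolding prod_algebra_def by blast

lemma fin_additive_mono:
  assumes "set_algebra X A" "fin_additive A m" "B \<in> A" "C \<in> A" "B \<subseteq> C"
  shows "m B \<le> m C"
proof -
  have CB: "C - B \<in> A" using set_algebra_Diff assms by blast
  have "m C = m (B \<union> (C - B))" using \<open>B \<subseteq> C\<close> by (simp add: Un_absorb1)
  also have "\<dots> = m B + m (C - B)" using assms(2,3) CB unfolding fin_additive_def by blast
  finally show ?thesis using assms(2) CB unfolding fin_additive_def by auto
qed

lemma admissibleD:
  assumes "admissible M"
  shows admissible_set_algebra: "set_algebra (sm_X M) (sm_A M)"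
    and admissible_fin_additive_mu2: "fin_additive (prod_algebra (sm_X M) (sm_A M)) (sm_mu2 M)"
    and admissible_G_in_prod_algebra: "sm_G M \<in> prod_algebra (sm_X M) (sm_A M)"
    and admissible_axiom_III: "\<And>B. B \<in> sm_A M \<Longrightarrow>
      sm_mu2 M ((B \<times> sm_X M) \<inter> sm_G M)
        = sm_mu M B + sm_eta M * sm_mu2 M ((Pi_pre M B \<times> sm_X M) \<inter> sm_G M)"
  using assms unfolding admissible_def Let_def by auto

lemma morphismD:
  assumes "morphism M M' f"
  shows morphism_admissible_source: "admissible M"
    and morphism_admissible_target: "admissible M'"
    and morphism_pre_in: "\<And>B'. B' \<in> sm_A M' \<Longrightarrow> pre (sm_X M) f B' \<in> sm_A M"
    and morphism_pre2_in: "\<And>S'. S' \<in> prod_algebra (sm_X M') (sm_A M') \<Longrightarrow>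
      pre2 (sm_X M) f S' \<in> prod_algebra (sm_X M) (sm_A M)"
    and morphism_mu2_pre2: "\<And>S'. S' \<in> prod_algebra (sm_X M') (sm_A M') \<Longrightarrow>
      sm_mu2 M (pre2 (sm_X M) f S') = sm_mu2 M' S'"
  using assms unfolding morphism_def by auto

lemma admissible_graph_slice_in_prod_algebra:
  assumes "admissible M" "B \<in> sm_A M"
  shows "(B \<times> sm_X M) \<inter> sm_G M \<in> prod_algebra (sm_X M) (sm_A M)"
  using assms
  by (intro set_algebra_Int[OF set_algebra_prod_algebra] Times_in_prod_algebra)
    (auto simp: admissibleD set_algebra_space)

lemma pre2_graph_slice_subset:
  assumes "pre2 X f G' \<subseteq> G"
  shows "pre2 X f ((B' \<times> X') \<inter> G') \<subseteq> (pre X f B' \<times> X) \<inter> G"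
  using assms unfolding pre2_def pre_def by auto

lemma morphism_mu2_graph_slice_le:
  assumes mor: "morphism M M' f" and G: "pre2 (sm_X M) f (sm_G M') \<subseteq> sm_G M"
    and B': "B' \<in> sm_A M'"
  shows "sm_mu2 M' ((B' \<times> sm_X M') \<inter> sm_G M')
           \<le> sm_mu2 M ((pre (sm_X M) f B' \<times> sm_X M) \<inter> sm_G M)"
proof -
  let ?S' = "(B' \<times> sm_X M') \<inter> sm_G M'"
  have adm: "admissible M" and S': "?S' \<in> prod_algebra (sm_X M') (sm_A M')"
    using mor B' by (auto intro: admissible_graph_slice_in_prod_algebra simp: morphismD)
  have "sm_mu2 M' ?S' = sm_mu2 M (pre2 (sm_X M) f ?S')"
    using morphism_mu2_pre2[OF mor S'] by simp
  also have "\<dots> \<le> sm_mu2 M ((pre (sm_X M) f B' \<times> sm_X M) \<inter> sm_G M)"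
    using adm mor B' S' pre2_graph_slice_subset[OF G]
    by (intro fin_additive_mono[OF set_algebra_prod_algebra])
      (auto simp: admissibleD morphismD intro: admissible_graph_slice_in_prod_algebra)
  finally show ?thesis .
qed

theorem proposition8p5:
  fixes M :: "'a struct_model" and M' :: "'b struct_model" and \<phi> :: "'a \<Rightarrow> 'b"
  assumes adm: "admissible M" and adm': "admissible M'"
    and eta_eq: "sm_eta M = sm_eta M'" and eta_lt: "sm_eta M < 1"
    and mor: "morphism M M' \<phi>"
  shows
    "(pre2 (sm_X M) \<phi> (sm_G M') \<subseteq> sm_G M \<longrightarrow>
       (\<forall>B'\<in>sm_A M'.
          sm_mu2 M' ((B' \<times> sm_X M') \<inter> sm_G M')
            \<le> sm_mu2 M ((pre (sm_X M) \<phi> B' \<times> sm_X M) \<inter> sm_G M) \<and>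
          sm_mu2 M ((pre (sm_X M) \<phi> B' \<times> sm_X M) \<inter> sm_G M)
            = sm_mu M (pre (sm_X M) \<phi> B')
              + sm_eta M * sm_mu2 M ((Pi_pre M (pre (sm_X M) \<phi> B') \<times> sm_X M) \<inter> sm_G M)))
     \<and>
     (\<phi> ` sm_X M = sm_X M' \<and> pre2 (sm_X M) \<phi> (sm_G M') = sm_G M \<longrightarrow>
       (\<forall>B'\<in>sm_A M'.
          sm_mu2 M' ((B' \<times> sm_X M') \<inter> sm_G M')
            = sm_mu M' B' + sm_eta M' * sm_mu2 M' ((Pi_pre M' B' \<times> sm_X M') \<inter> sm_G M')))"
proof (intro conjI impI ballI)
  fix B' assume "pre2 (sm_X M) \<phi> (sm_G M') \<subseteq> sm_G M" and "B' \<in> sm_A M'"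
  then show "sm_mu2 M' ((B' \<times> sm_X M') \<inter> sm_G M')
      \<le> sm_mu2 M ((pre (sm_X M) \<phi> B' \<times> sm_X M) \<inter> sm_G M)"
    using morphism_mu2_graph_slice_le[OF mor] by blast
next
  fix B' assume "B' \<in> sm_A M'"
  then show "sm_mu2 M ((pre (sm_X M) \<phi> B' \<times> sm_X M) \<inter> sm_G M)
      = sm_mu M (pre (sm_X M) \<phi> B')
        + sm_eta M * sm_mu2 M ((Pi_pre M (pre (sm_X M) \<phi> B') \<times> sm_X M) \<inter> sm_G M)"
    using admissible_axiom_III[OF adm] morphism_pre_in[OF mor] by blast
next
  fix B' assume "B' \<in> sm_A M'"
  then show "sm_mu2 M' ((B' \<times> sm_X M') \<inter> sm_G M')
      = sm_mu M' B' + sm_eta M' * sm_mu2 M' ((Pi_pre M' B' \<times> sm_X M') \<inter> sm_G M')"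
    using admissible_axiom_III[OF adm'] by blast
qed

end
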